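(* In the setting below, with $\mu=\alpha_1+\alpha_2+2\alpha_3+2\alpha_4+\alpha_5+\alpha_6$ and $\tau\mu=\alpha_1+\alpha_2+\alpha_3+2\alpha_4+2\alpha_5+\alpha_6$, the vector $$P=(-2\alpha_1-\alpha_3+\alpha_5+2\alpha_6)(-1)\otimes e^{\mu}+(2\alpha_1+\alpha_3-\alpha_5-2\alpha_6)(-1)\otimes e^{\tau\mu}+3\otimes e^{\mu+\alpha_1-\alpha_6}+3\otimes e^{\tau\mu-\alpha_1+\alpha_6}\in V^{\Lambda_0}$$ is a highest weight vector of type $Vir(\tfrac45,\tfrac75)\otimes W^{\Omega_4}$, i.e. it satisfies (HW1)–(HW5) with $h=7/5$ and $\omega_j=\omega_4$.
   Context: Setting. $Q$ is the $E_6$ root lattice with simple roots $\alpha_1,\dots,\alpha_6$ (Dynkin chain $\alpha_1-\alpha_3-\alpha_4-\alpha_5-\alpha_6$, $\alpha_2$ attached to $\alpha_4$), form from the Cartan matrix, fundamental weights $\lambda_i$, $P_{\rm wt}=\bigoplus\mathbb Z\lambda_i$, $\mathfrak h=\mathbb C\otimes P_{\rm wt}$. $\varepsilon$ is bimultiplicative on $P_{\rm wt}$ with $[\varepsilon(\lambda_i,\lambda_j)]$ rows $(1,1,1,1,1,1)$, $(-1,1,1,1,1,-1)$, $(-1,1,1,1,1,1)$, $(1,-1,1,1,1,1)$, $(1,1,1,1,1,-1)$, $(1,1,1,1,1,1)$. $V_{P_{\rm wt}}=S(\hat{\mathfrak h}^-)\otimes\mathbb C[P_{\rm wt}]$ with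 Heisenberg operators $h(n)$ ($[h(m),h'(n)]=m\langle h,h'\rangle\delta_{m+n,0}$, $h(n)1=0$ for $n>0$, $h(0)(u\otimes e^\beta)=\langle h,\beta\rangle u\otimes e^\beta$). For $\alpha\in Q$: $Y(1\otimes e^\alpha,z)=\exp(\sum_{k\ge1}\frac{\alpha(-k)}kz^k)\exp(-\sum_{k\ge1}\frac{\alpha(k)}kz^{-k})e_\alpha z^{\alpha(0)}=\sum_n\{1\otimes e^\alpha\}_nz^{-n-1}$, $e_\alpha(u\otimes e^\beta)=\varepsilon(\alpha,\beta)u\otimes e^{\alpha+\beta}$, $z^{\alpha(0)}(u\otimes e^\beta)=z^{\langle\alpha,\beta\rangle}u\otimes e^\beta$; $Y(h_1(-1)\cdots h_k(-1)\otimes e^\alpha,z)=\,:h_1(z)\cdots h_k(z)Y(1\otimes e^\alpha,z):$, $h(z)=\sum_nh(n)z^{-n-1}$. $V^{\Lambda_0}=S(\hat{\mathfrak h}^-)\otimes\mathbb C[Q]$. $\tau$: $\alpha_1\leftrightarrow\alpha_6$, $\alpha_3\leftrightarrow\alpha_5$; $\mathrm{Proj}(\nu)=(\nu+\tau\nu)/2$. $\theta=\alpha_1+2\alpha_2+2\alpha_3+3\alpha_4+2\alpha_5+\alpha_6$. Raising operators of $\tilde{\mathfrak a}$ ($F_4^{(1)}$): $\{\beta_1\}_0=\{1\otimes e^{\alpha_2}\}_0$, $\{\beta_2\}_0=\{1\otimes e^{\alpha_4}\}_0$, $\{\beta_3\}_0=\{1\otimes e^{\alpha_3}\}_0+\{1\otimes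 e^{\alpha_5}\}_0$, $\{\beta_4\}_0=\{1\otimes e^{\alpha_1}\}_0+\{1\otimes e^{\alpha_6}\}_0$, $\{1\otimes e^{-\theta}\}_1$. Coset conformal vector $\omega=\frac1{10}[(-\lambda_1+\lambda_6)(-1)^2+(\lambda_3-\lambda_5)(-1)^2+(\lambda_1-\lambda_3+\lambda_5-\lambda_6)(-1)^2]\otimes e^0+\frac15(-1\otimes e^{\pm\gamma_1}-1\otimes e^{\pm\gamma_2}+1\otimes e^{\pm\gamma_3})$, $\gamma_1=\alpha_1-\alpha_6$, $\gamma_2=\alpha_3-\alpha_5$, $\gamma_3=\gamma_1+\gamma_2$, $1\otimes e^{\pm\gamma}:=1\otimes e^\gamma+1\otimes e^{-\gamma}$; $L(n)=\{\omega\}_{n+1}$ (Virasoro, $c=4/5$, commuting with $\tilde{\mathfrak a}$). $\omega_4=\frac{\lambda_1+\lambda_6}2$, $\Omega_4$ the level one $F_4^{(1)}$ weight with finite part $\omega_4$, $W^{\Omega_4}$ its irreducible module. A nonzero $v$ is a highest weight vector of type $Vir(\frac45,h)\otimes W^{\Omega_j}$ if (HW1) $\{1\otimes e^{-\theta}\}_1v=0$; (HW2) $\{\beta_i\}_0v=0$, $i=1,\dots,4$; (HW3) $L(1)v=L(2)v=0$; (HW4) $L(0)v=hv$; (HW5) $v\in\bigoplus_kS(\hat{\mathfrak h}^-)\otimes e^{\nu_k}$ with $\mathrm{Proj}(\nu_k)=\omega_j$. (The lattice is written $P_{\rm wt}$ here to avoid a clash with the vector named $P$.) *)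

theory Defs
  imports Complex_Main "HOL-Library.Poly_Mapping" "HOL-Library.Function_Algebras"
begin

section \<open>Index set of the E6 Dynkin diagram\<close>

datatype idx = I1 | I2 | I3 | I4 | I5 | I6

lemma UNIV_idx: "(UNIV :: idx set) = {I1, I2, I3, I4, I5, I6}"
  using idx.exhaust by auto

instance idx :: finite
  by standard (simp add: UNIV_idx)

fun ix :: "idx \<Rightarrow> nat" where
  "ix I1 = 0" | "ix I2 = 1" | "ix I3 = 2" | "ix I4 = 3" | "ix I5 = 4" | "ix I6 = 5"

definition vec6 :: "'a \<Rightarrow> 'a \<Rightarrow> 'a \<Rightarrow> 'a \<Rightarrow> 'a \<Rightarrow> 'a \<Rightarrow> idx \<Rightarrow> 'a" where
  "vec6 a1 a2 a3 a4 a5 a6 = (\<lambda>i. case i of I1 \<Rightarrow> a1 | I2 \<Rightarrow> a2 | I3 \<Rightarrow> a3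
                                         | I4 \<Rightarrow> a4 | I5 \<Rightarrow> a5 | I6 \<Rightarrow> a6)"

text \<open>Coordinates.
  \<^item> an element of the weight lattice P_wt is stored by its coordinates w.r.t. the
    fundamental weights lambda_1..lambda_6 (type wt);
  \<^item> an element of the root lattice Q is stored by its coordinates w.r.t. the
    simple roots alpha_1..alpha_6 (type rt);
  \<^item> an element of h = C (x) P_wt is stored by its (complex) coordinates w.r.t. the
    fundamental weights (type hvec).\<close>

type_synonym wt = "idx \<Rightarrow> int"
type_synonym rt = "idx \<Rightarrow> int"
type_synonym hvec = "idx \<Rightarrow> complex"

text \<open>Cartan matrix of E6: chain 1-3-4-5-6, node 2 attached to node 4.\<close>
definition cartan :: "idx \<Rightarrow> idx \<Rightarrow> int" where
  "cartan i j = [[2, 0, -1, 0, 0, 0],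
                 [0, 2, 0, -1, 0, 0],
                 [-1, 0, 2, -1, 0, 0],
                 [0, -1, -1, 2, -1, 0],
                 [0, 0, 0, -1, 2, -1],
                 [0, 0, 0, 0, -1, 2]] ! ix i ! ix j"

text \<open>Gram matrix of the fundamental weights, gram i j = (lambda_i, lambda_j),
  i.e. the inverse of the Cartan matrix (see lemma cartan_gram_inverse).\<close>
definition gram :: "idx \<Rightarrow> idx \<Rightarrow> rat" where
  "gram i j = [[4/3, 1, 5/3, 2, 4/3, 2/3],
               [1, 2, 2, 3, 2, 1],
               [5/3, 2, 10/3, 4, 8/3, 4/3],
               [2, 3, 4, 6, 4, 2],
               [4/3, 2, 8/3, 4, 10/3, 5/3],
               [2/3, 1, 4/3, 2, 5/3, 4/3]] ! ix i ! ix j"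

lemma cartan_gram_inverse:
  "(\<Sum>k\<in>UNIV. of_int (cartan i k) * gram k j) = (if i = j then 1 else 0)"
  by (cases i; cases j) (simp_all add: UNIV_idx cartan_def gram_def)

text \<open>Simple root alpha_i in fundamental-weight coordinates; Q -> P_wt.\<close>
definition root_to_wt :: "rt \<Rightarrow> wt" where
  "root_to_wt a = (\<lambda>j. \<Sum>i\<in>UNIV. a i * cartan i j)"

definition hv_of_wt :: "wt \<Rightarrow> hvec" where
  "hv_of_wt b = (\<lambda>i. of_int (b i))"

definition lam :: "idx \<Rightarrow> hvec" where
  "lam j = (\<lambda>i. if i = j then 1 else 0)"

definition hform :: "hvec \<Rightarrow> hvec \<Rightarrow> complex" where
  "hform x y = (\<Sum>i\<in>UNIV. \<Sum>j\<in>UNIV. x i * of_rat (gram i j) * y j)"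

text \<open>(alpha, beta) for alpha in Q (root coordinates) and beta in P_wt (weight
  coordinates); an integer since (alpha_i, lambda_j) = delta_ij.\<close>
definition pair_rw :: "rt \<Rightarrow> wt \<Rightarrow> int" where
  "pair_rw a b = (\<Sum>i\<in>UNIV. a i * b i)"

definition eps_tab :: "idx \<Rightarrow> idx \<Rightarrow> int" where
  "eps_tab i j = [[1,1,1,1,1,1],
                  [-1,1,1,1,1,-1],
                  [-1,1,1,1,1,1],
                  [1,-1,1,1,1,1],
                  [1,1,1,1,1,-1],
                  [1,1,1,1,1,1]] ! ix i ! ix j"

text \<open>The bimultiplicative map eps on P_wt with the above values on the
  fundamental weights: eps(x,y) = prod_{i,j} eps(lambda_i,lambda_j)^(x_i y_j).\<close>
definition epsw :: "wt \<Rightarrow> wt \<Rightarrow> complex" where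
  "epsw x y = (if even (\<Sum>i\<in>UNIV. \<Sum>j\<in>UNIV. if eps_tab i j = -1 then x i * y j else 0)
               then 1 else -1)"

section \<open>The Fock space S(h^-) and V_{P_wt}\<close>

text \<open>A monomial in the generators lambda_i(-k), k >= 1: the key (i, k - 1) carries
  the exponent of lambda_i(-k).  A vector of S(h^-) is given by its coefficients
  on these monomials; a vector of V_{P_wt} = S(h^-) (x) C[P_wt] by its components
  on the summands S(h^-) (x) e^beta.\<close>

type_synonym mono = "(idx \<times> nat) \<Rightarrow>\<^sub>0 nat"
type_synonym fock = "mono \<Rightarrow> complex"
type_synonym vspace = "wt \<Rightarrow> fock"

definition var :: "idx \<Rightarrow> nat \<Rightarrow> mono" where
  "var i k = Poly_Mapping.single (i, k - 1) 1"

text \<open>Weight (degree) of a monomial: lambda_i(-k) has weight k.\<close>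
definition mwt :: "mono \<Rightarrow> nat" where
  "mwt M = (\<Sum>x\<in>Poly_Mapping.keys M. (snd x + 1) * Poly_Mapping.lookup M x)"

definition vac :: fock where
  "vac = (\<lambda>M. if M = 0 then 1 else 0)"

text \<open>Multiplication by lambda_i(-k) and d/d lambda_i(-k), for k >= 1.\<close>
definition mul_var :: "idx \<Rightarrow> nat \<Rightarrow> fock \<Rightarrow> fock" where
  "mul_var i k w = (\<lambda>M. if Poly_Mapping.lookup M (i, k - 1) > 0 then w (M - var i k) else 0)"

definition der_var :: "idx \<Rightarrow> nat \<Rightarrow> fock \<Rightarrow> fock" where
  "der_var i k w = (\<lambda>M. of_nat (Poly_Mapping.lookup M (i, k - 1) + 1) * w (M + var i k))"

text \<open>h(-k) (creation) and h(k) (annihilation), k >= 1, on S(h^-):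
  h(-k) = multiplication by sum_i h_i lambda_i(-k);
  h(k) = sum_j k (h, lambda_j) d/d lambda_j(-k)
  (so that [h(k), h'(-k)] = k (h, h') and h(k) 1 = 0).\<close>
definition cr :: "hvec \<Rightarrow> nat \<Rightarrow> fock \<Rightarrow> fock" where
  "cr h k w = (\<lambda>M. \<Sum>i\<in>UNIV. h i * mul_var i k w M)"

definition an :: "hvec \<Rightarrow> nat \<Rightarrow> fock \<Rightarrow> fock" where
  "an h k w = (\<lambda>M. \<Sum>j\<in>UNIV. of_nat k * hform h (lam j) * der_var j k w M)"

definition hmode :: "hvec \<Rightarrow> int \<Rightarrow> vspace \<Rightarrow> vspace" where
  "hmode h n v = (\<lambda>\<beta>. if n < 0 then cr h (nat (- n)) (v \<beta>)
                     else if n = 0 then (\<lambda>M. hform h (hv_of_wt \<beta>) * v \<beta> M)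
                     else an h (nat n) (v \<beta>))"

text \<open>Coefficients of the exponentials:
  exp(-sum_{k>=1} h(k)/k z^-k) = sum_m sE h m z^-m,
  exp( sum_{k>=1} h(-k)/k z^k) = sum_j pE h j z^j,
  determined by m sE_m = - sum_{k=1..m} h(k) sE_{m-k},  j pE_j = sum_{k=1..j} h(-k) pE_{j-k}.\<close>
fun sE :: "hvec \<Rightarrow> nat \<Rightarrow> fock \<Rightarrow> fock" where
  "sE h m w = (if m = 0 then w
     else (\<lambda>M. - (1 / of_nat m) * (\<Sum>k\<in>{1..m}. an h k (sE h (m - k) w) M)))"

fun pE :: "hvec \<Rightarrow> nat \<Rightarrow> fock \<Rightarrow> fock" where
  "pE h m w = (if m = 0 then w
     else (\<lambda>M. (1 / of_nat m) * (\<Sum>k\<in>{1..m}. cr h k (pE h (m - k) w) M)))"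

text \<open>The mode {1 (x) e^alpha}_n, alpha in Q (root coordinates):
  on u (x) e^beta it equals
  eps(alpha,beta) sum_{j,m >= 0, j - m = -n-1-(alpha,beta)} pE_j (sE_m u) (x) e^(alpha+beta).
  Evaluated at the component gamma = alpha + beta and at a monomial M, only
  j <= weight(M) can contribute (pE_j raises the weight by j), so the sum is finite.\<close>
definition vop_e :: "rt \<Rightarrow> int \<Rightarrow> vspace \<Rightarrow> vspace" where
  "vop_e a n v = (\<lambda>\<gamma> M.
     (let \<beta> = \<gamma> - root_to_wt a; h = hv_of_wt (root_to_wt a) in
      epsw (root_to_wt a) \<beta> *
      (\<Sum>j\<in>{0..mwt M}. (let m = int j + n + 1 + pair_rw a \<beta> in
          if m \<ge> 0 then pE h j (sE h (nat m) (v \<beta>)) M else 0))))"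

text \<open>The mode {h1(-1) h2(-1) (x) e^0}_n of Y(h1(-1)h2(-1) (x) e^0, z) = :h1(z) h2(z):,
  i.e. sum_{a + b = n - 1} :h1(a) h2(b):, where in the normal ordering the
  operators h(k), k >= 0, stand to the right.  At a monomial M only
  -weight(M) <= a <= n - 1 + weight(M) contribute.\<close>
definition vop_hh :: "hvec \<Rightarrow> hvec \<Rightarrow> int \<Rightarrow> vspace \<Rightarrow> vspace" where
  "vop_hh h1 h2 n v = (\<lambda>\<beta> M.
     \<Sum>a\<in>{- int (mwt M) .. n - 1 + int (mwt M)}.
       (if a \<ge> 0 \<and> n - 1 - a < 0 then hmode h2 (n - 1 - a) (hmode h1 a v)
        else hmode h1 a (hmode h2 (n - 1 - a) v)) \<beta> M)"

definition vsc :: "complex \<Rightarrow> vspace \<Rightarrow> vspace" where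
  "vsc c v = (\<lambda>\<beta> M. c * v \<beta> M)"

section \<open>The coset Virasoro operators L(n) = {omega}_{n+1}\<close>

definition gam1 :: rt where "gam1 = vec6 1 0 0 0 0 (-1)"
definition gam2 :: rt where "gam2 = vec6 0 0 1 0 (-1) 0"
definition gam3 :: rt where "gam3 = gam1 + gam2"

definition om_h1 :: hvec where "om_h1 = vec6 (-1) 0 0 0 0 1"
definition om_h2 :: hvec where "om_h2 = vec6 0 0 1 0 (-1) 0"
definition om_h3 :: hvec where "om_h3 = vec6 1 0 (-1) 0 1 (-1)"

definition Lvir :: "int \<Rightarrow> vspace \<Rightarrow> vspace" where
  "Lvir n v =
     vsc (1/10) (vop_hh om_h1 om_h1 (n + 1) v + vop_hh om_h2 om_h2 (n + 1) v
                 + vop_hh om_h3 om_h3 (n + 1) v)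
   + vsc (1/5) (- (vop_e gam1 (n + 1) v + vop_e (- gam1) (n + 1) v)
                - (vop_e gam2 (n + 1) v + vop_e (- gam2) (n + 1) v)
                + (vop_e gam3 (n + 1) v + vop_e (- gam3) (n + 1) v))"

definition alpha :: "idx \<Rightarrow> rt" where
  "alpha i = (\<lambda>j. if j = i then 1 else 0)"

definition theta :: rt where "theta = vec6 1 2 2 3 2 1"

text \<open>Diagram automorphism tau (alpha1 <-> alpha6, alpha3 <-> alpha5; it permutes the
  fundamental weights in the same way) and Proj(nu) = (nu + tau nu)/2.\<close>
fun tau :: "idx \<Rightarrow> idx" where
  "tau I1 = I6" | "tau I6 = I1" | "tau I3 = I5" | "tau I5 = I3" | "tau I2 = I2" | "tau I4 = I4"

definition proj_wt :: "wt \<Rightarrow> idx \<Rightarrow> rat" where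
  "proj_wt \<nu> = (\<lambda>i. (of_int (\<nu> i) + of_int (\<nu> (tau i))) / 2)"

definition omega4 :: "idx \<Rightarrow> rat" where "omega4 = vec6 (1/2) 0 0 0 0 (1/2)"

definition is_hwv :: "complex \<Rightarrow> (idx \<Rightarrow> rat) \<Rightarrow> vspace \<Rightarrow> bool" where
  "is_hwv h wj v \<longleftrightarrow>
     v \<noteq> 0
   \<comment> \<open>(HW1)\<close>
   \<and> vop_e (- theta) 1 v = 0
   \<comment> \<open>(HW2)\<close>
   \<and> vop_e (alpha I2) 0 v = 0
   \<and> vop_e (alpha I4) 0 v = 0
   \<and> vop_e (alpha I3) 0 v + vop_e (alpha I5) 0 v = 0
   \<and> vop_e (alpha I1) 0 v + vop_e (alpha I6) 0 v = 0
   \<comment> \<open>(HW3)\<close>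
   \<and> Lvir 1 v = 0 \<and> Lvir 2 v = 0
   \<comment> \<open>(HW4)\<close>
   \<and> Lvir 0 v = vsc h v
   \<comment> \<open>(HW5): v is a finite sum of elements of S(h^-) (x) e^nu_k with Proj(nu_k) = omega_j\<close>
   \<and> finite {\<beta>. v \<beta> \<noteq> 0} \<and> (\<forall>\<beta>. finite {M. v \<beta> M \<noteq> 0})
   \<and> (\<forall>\<beta>. v \<beta> \<noteq> 0 \<longrightarrow> proj_wt \<beta> = wj)"

definition tens :: "fock \<Rightarrow> wt \<Rightarrow> vspace" where
  "tens u \<beta> = (\<lambda>\<gamma>. if \<gamma> = \<beta> then u else (\<lambda>_. 0))"

definition mu :: rt where "mu = vec6 1 1 2 2 1 1"
definition tau_mu :: rt where "tau_mu = vec6 1 1 1 2 2 1"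

definition P_vec :: vspace where
  "P_vec =
     tens (cr (hv_of_wt (root_to_wt (vec6 (-2) 0 (-1) 0 1 2))) 1 vac) (root_to_wt mu)
   + tens (cr (hv_of_wt (root_to_wt (vec6 2 0 1 0 (-1) (-2)))) 1 vac) (root_to_wt tau_mu)
   + tens (\<lambda>M. 3 * vac M) (root_to_wt (mu + alpha I1 - alpha I6))
   + tens (\<lambda>M. 3 * vac M) (root_to_wt (tau_mu - alpha I1 + alpha I6))"

end

theory Submission
  imports Defs
begin

text \<open>
  Every component of P lies in the span of \<open>1\<close> and the \<open>h(-1)1\<close>, the states of weight at
  most one in \<open>S(h\<^sup>-)\<close>. On such states the exponentials in \<open>Y(1 \<otimes> e\<^sup>\<alpha>, z)\<close> contribute
  only their first two terms, and in \<open>:h1(z) h2(z):\<close> only the modes \<open>a \<in> {-1, 0, 1}\<close>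
  survive. Hence \<open>{1 \<otimes> e\<^sup>\<alpha>}\<^sub>n\<close> and the Virasoro modes send a tensor \<open>u \<otimes> e\<^sup>\<beta>\<close> of this kind to
  a single tensor of the same kind, with coefficients given in closed form by \<open>\<epsilon>\<close>, the form
  on \<open>h\<close> and \<open>(\<alpha>, \<beta>)\<close>. The conditions (HW1)-(HW4) thus become identities between
  finitely many explicit coordinate vectors, and (HW5) is read off from the four weights
  occurring in P.
\<close>

section \<open>The Fock space\<close>

lemma lookup_var: "Poly_Mapping.lookup (var i k) x = (if x = (i, k - 1) then 1 else 0)"
  by (simp add: var_def lookup_single when_def)

lemma mwt_eq_0_iff: "mwt M = 0 \<longleftrightarrow> M = 0"
proof -
  have "mwt M = 0 \<longleftrightarrow> (\<forall>x\<in>Poly_Mapping.keys M. Poly_Mapping.lookup M x = 0)"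
    by (auto simp: mwt_def)
  also have "\<dots> \<longleftrightarrow> Poly_Mapping.keys M = {}"
    by (metis in_keys_iff ex_in_conv)
  finally show ?thesis by simp
qed

lemma add_var_eq_var_iff: "M + var j k = var i l \<longleftrightarrow> M = 0 \<and> (j, k - 1) = (i, l - 1)"
proof
  assume eq: "M + var j k = var i l"
  then have "Poly_Mapping.lookup (M + var j k) (j, k - 1) = Poly_Mapping.lookup (var i l) (j, k - 1)"
    by simp
  then have idx: "(j, k - 1) = (i, l - 1)"
    by (simp add: lookup_add lookup_var split: if_splits)
  have "M = 0"
  proof (rule poly_mapping_eqI)
    fix x
    have "Poly_Mapping.lookup (M + var j k) x = Poly_Mapping.lookup (var i l) x" using eq by simp
    then show "Poly_Mapping.lookup M x = Poly_Mapping.lookup 0 x"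
      using idx by (simp add: lookup_add lookup_var split: if_splits)
  qed
  with idx show "M = 0 \<and> (j, k - 1) = (i, l - 1)" by simp
next
  assume "M = 0 \<and> (j, k - 1) = (i, l - 1)"
  then show "M + var j k = var i l" by (simp add: var_def)
qed

lemma add_var_neq_0: "M + var i k \<noteq> 0"
proof
  assume "M + var i k = 0"
  then have "Poly_Mapping.lookup (M + var i k) (i, k - 1) = 0" by simp
  then show False by (simp add: lookup_add lookup_var)
qed

lemma var_eq_var_iff: "var i k = var j k \<longleftrightarrow> i = j"
  using add_var_eq_var_iff[of 0 i k j k] by simp

lemma mul_var_vac: "mul_var i k vac M = (if M = var i k then 1 else 0)"
proof -
  have "0 < Poly_Mapping.lookup M (i, k - 1) \<and> M - var i k = 0 \<longleftrightarrow> M = var i k"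
  proof
    assume M: "0 < Poly_Mapping.lookup M (i, k - 1) \<and> M - var i k = 0"
    show "M = var i k"
    proof (rule poly_mapping_eqI)
      fix x
      have "Poly_Mapping.lookup M x - Poly_Mapping.lookup (var i k) x = 0"
        using M by (metis lookup_minus lookup_zero)
      then show "Poly_Mapping.lookup M x = Poly_Mapping.lookup (var i k) x"
        using M by (auto simp: lookup_var)
    qed
  qed (simp add: lookup_var)
  then show ?thesis by (auto simp: mul_var_def vac_def)
qed

lemma der_var_vac: "der_var j k vac = 0"
  by (simp add: der_var_def vac_def fun_eq_iff add_var_neq_0)

lemma der_var_mul_var_vac:
  "der_var j k (mul_var i l vac) M = (if (j, k - 1) = (i, l - 1) then vac M else 0)"
  unfolding der_var_def mul_var_vac add_var_eq_var_iff by (simp add: vac_def)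

definition fock_scale :: "complex \<Rightarrow> fock \<Rightarrow> fock" where
  "fock_scale c w = (\<lambda>M. c * w M)"

lemma mul_var_add: "mul_var i k (w1 + w2) = mul_var i k w1 + mul_var i k w2"
  by (simp add: mul_var_def fun_eq_iff)

lemma mul_var_scale: "mul_var i k (fock_scale c w) = fock_scale c (mul_var i k w)"
  by (simp add: mul_var_def fock_scale_def fun_eq_iff)

lemma cr_at_0: "cr h k w 0 = 0"
  by (simp add: cr_def mul_var_def)

lemma cr_add: "cr h k (w1 + w2) = cr h k w1 + cr h k w2"
  by (simp add: cr_def mul_var_add fun_eq_iff algebra_simps sum.distrib)

lemma cr_zero: "cr h k 0 = 0"
  using cr_add[of h k 0 0] by simp

lemma an_add: "an h k (w1 + w2) = an h k w1 + an h k w2"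
  by (simp add: an_def der_var_def fun_eq_iff algebra_simps sum.distrib)

lemma an_zero: "an h k 0 = 0"
  using an_add[of h k 0 0] by simp

lemma an_scale: "an h k (fock_scale c w) = fock_scale c (an h k w)"
  by (simp add: an_def der_var_def fock_scale_def fun_eq_iff algebra_simps sum_distrib_left)

lemma an_vac: "an h k vac = 0"
  by (simp add: an_def fun_eq_iff der_var_vac)

lemma fock_scale_zero: "fock_scale c 0 = 0"
  by (simp add: fock_scale_def fun_eq_iff)

lemma hform_zero: "hform h 0 = 0"
  by (simp add: hform_def)

lemma hform_scale_right: "hform h (\<lambda>i. d * g i) = d * hform h g"
  by (simp add: hform_def sum_distrib_left algebra_simps)

lemma hform_expand_lam: "hform h g = (\<Sum>j\<in>UNIV. hform h (lam j) * g j)"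
  by (simp add: hform_def lam_def sum_distrib_right sum_distrib_left algebra_simps
      if_distrib cong: if_cong) (rule sum.swap)

lemma an_cr_vac: "an h k (cr g 1 vac) = (if k = 1 then fock_scale (hform h g) vac else 0)"
proof -
  have der: "der_var j k (cr g 1 vac) M = (if k = 1 then g j * vac M else 0)" if "k \<noteq> 0" for j M
  proof -
    have "der_var j k (cr g 1 vac) M = (\<Sum>i\<in>UNIV. g i * der_var j k (mul_var i 1 vac) M)"
      by (simp add: der_var_def cr_def sum_distrib_left algebra_simps)
    also have "\<dots> = (if k = 1 then g j * vac M else 0)"
      using that by (simp add: der_var_mul_var_vac if_distrib cong: if_cong)
    finally show ?thesis .
  qed
  show ?thesis
  proof (cases "k = 0")
    case False
    then show ?thesis
      unfolding an_def der[OF False]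
      by (auto simp: fun_eq_iff fock_scale_def hform_expand_lam[of h g] sum_distrib_left mult_ac)
  qed (simp add: an_def fun_eq_iff)
qed

section \<open>States of weight at most one\<close>

definition fock_le1 :: "complex \<Rightarrow> hvec \<Rightarrow> fock" where
  "fock_le1 c g = (\<lambda>M. c * vac M + cr g 1 vac M)"

lemma fock_le1_at_0: "fock_le1 c g 0 = c"
  by (simp add: fock_le1_def vac_def cr_at_0)

lemma fock_le1_add: "fock_le1 c g + fock_le1 c' g' = fock_le1 (c + c') (\<lambda>i. g i + g' i)"
  by (simp add: fock_le1_def cr_def fun_eq_iff sum.distrib algebra_simps)

lemma fock_le1_diff: "fock_le1 c g - fock_le1 c' g' = fock_le1 (c - c') (\<lambda>i. g i - g' i)"
  by (simp add: fock_le1_def cr_def fun_eq_iff sum_subtractf algebra_simps)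

lemma fock_le1_uminus: "- fock_le1 c g = fock_le1 (- c) (\<lambda>i. - g i)"
  by (simp add: fock_le1_def cr_def fun_eq_iff sum_negf)

lemma fock_le1_scale: "fock_scale d (fock_le1 c g) = fock_le1 (d * c) (\<lambda>i. d * g i)"
  by (simp add: fock_le1_def fock_scale_def cr_def fun_eq_iff sum_distrib_left algebra_simps)

lemma fock_le1_numeral: "numeral k * fock_le1 c g = fock_le1 (numeral k * c) (\<lambda>i. numeral k * g i)"
  by (simp add: fock_le1_def cr_def fun_eq_iff sum_distrib_left algebra_simps)

lemma fock_le1_zero: "fock_le1 0 0 = 0" "fock_le1 0 (\<lambda>i. 0) = 0"
  by (simp_all add: fock_le1_def cr_def fun_eq_iff)

lemma fock_scale_vac: "fock_scale c vac = fock_le1 c 0"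
  by (simp add: fock_le1_def fock_scale_def cr_def fun_eq_iff)

lemma fock_le1_eq_0_iff: "fock_le1 c g = 0 \<longleftrightarrow> c = 0 \<and> (\<forall>i. g i = 0)"
proof
  assume vanish: "fock_le1 c g = 0"
  then have "c = 0" using fock_le1_at_0[of c g] by simp
  moreover have "g i = 0" for i
  proof -
    have "fock_le1 c g (var i 1) = c * vac (var i 1) + g i"
      by (simp add: fock_le1_def cr_def mul_var_vac var_eq_var_iff if_distrib cong: if_cong)
    with vanish \<open>c = 0\<close> show ?thesis by simp
  qed
  ultimately show "c = 0 \<and> (\<forall>i. g i = 0)" by simp
qed (simp add: fock_le1_def cr_def fun_eq_iff)

lemma fock_le1_eq_iff: "fock_le1 c g = fock_le1 c' g' \<longleftrightarrow> c = c' \<and> (\<forall>i. g i = g' i)"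
  using fock_le1_eq_0_iff[of "c - c'" "\<lambda>i. g i - g' i"]
  by (simp add: fock_le1_diff[symmetric])

lemma finite_support_fock_le1: "finite {M. fock_le1 c g M \<noteq> 0}"
proof (rule finite_subset)
  have "fock_le1 c g M = 0" if "M \<notin> insert 0 (range (\<lambda>i. var i 1))" for M
    using that unfolding fock_le1_def cr_def mul_var_vac by (simp add: vac_def image_iff)
  then show "{M. fock_le1 c g M \<noteq> 0} \<subseteq> insert 0 (range (\<lambda>i. var i 1))"
    by blast
qed simp

lemma an_fock_le1: "an h k (fock_le1 c g) = (if k = 1 then fock_le1 (hform h g) 0 else 0)"
proof -
  have "fock_le1 c g = fock_scale c vac + cr g 1 vac"
    by (simp add: fock_le1_def fock_scale_def fun_eq_iff)
  then show ?thesis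
    by (simp only: an_add an_scale an_vac an_cr_vac)
      (auto simp: fock_le1_def fock_scale_def cr_def fun_eq_iff)
qed

text \<open>Since \<open>One_nat_def\<close> is a simp rule, rules meant for rewriting mention \<open>Suc 0\<close> rather than \<open>1 :: nat\<close>.\<close>

lemma cr_fock_le1_vac: "cr h (Suc 0) (fock_le1 c 0) = fock_le1 0 (\<lambda>i. c * h i)"
  unfolding fock_scale_vac[symmetric] cr_def mul_var_scale
  by (simp add: fock_le1_def cr_def fock_scale_def fun_eq_iff mult_ac)

section \<open>The coefficients of the exponentials\<close>

declare sE.simps[simp del] pE.simps[simp del]

lemma sE_0 [simp]: "sE h 0 w = w" and pE_0 [simp]: "pE h 0 w = w"
  by (simp_all add: sE.simps pE.simps)

lemma pE_Suc_0: "pE h (Suc 0) w = cr h 1 w"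
  by (simp add: pE.simps fun_eq_iff)

lemma sE_add: "sE h m (w1 + w2) = sE h m w1 + sE h m w2"
proof (induction m rule: less_induct)
  case (less m)
  have "an h k (sE h (m - k) (w1 + w2)) = an h k (sE h (m - k) w1) + an h k (sE h (m - k) w2)"
    if "k \<in> {1..m}" for k
  proof -
    have "sE h (m - k) (w1 + w2) = sE h (m - k) w1 + sE h (m - k) w2"
      using that by (intro less.IH) auto
    then show ?thesis by (simp only: an_add)
  qed
  then show ?case
    by (subst (1 2 3) sE.simps) (simp add: fun_eq_iff sum.distrib algebra_simps)
qed

lemma pE_add: "pE h m (w1 + w2) = pE h m w1 + pE h m w2"
proof (induction m rule: less_induct)
  case (less m)
  have "cr h k (pE h (m - k) (w1 + w2)) = cr h k (pE h (m - k) w1) + cr h k (pE h (m - k) w2)"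
    if "k \<in> {1..m}" for k
  proof -
    have "pE h (m - k) (w1 + w2) = pE h (m - k) w1 + pE h (m - k) w2"
      using that by (intro less.IH) auto
    then show ?thesis by (simp only: cr_add)
  qed
  then show ?case
    by (subst (1 2 3) pE.simps) (simp add: fun_eq_iff sum.distrib algebra_simps)
qed

lemma sE_zero: "sE h m 0 = 0" and pE_zero: "pE h m 0 = 0"
  using sE_add[of h m 0 0] pE_add[of h m 0 0] by simp_all

lemma sE_fock_le1:
  "sE h m (fock_le1 c g) = (if m = 0 then fock_le1 c g else if m = 1 then fock_le1 (- hform h g) 0 else 0)"
proof (induction m rule: less_induct)
  case (less m)
  show ?case
  proof (cases "m \<le> 1")
    case True
    then consider "m = 0" | "m = 1" by linarith
    then show ?thesis
    proof cases
      case 2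
      then show ?thesis
        by (simp add: sE.simps an_fock_le1 fun_eq_iff) (simp add: fock_le1_def cr_def)
    qed simp
  next
    case False
    have "an h k (sE h (m - k) (fock_le1 c g)) = 0" if "k \<in> {1..m}" for k
      using False that less.IH[of "m - k"] by (auto simp: an_fock_le1 an_zero hform_zero fock_le1_zero)
    with False show ?thesis
      by (subst sE.simps) (simp add: fun_eq_iff)
  qed
qed

section \<open>The vertex operators of the lattice\<close>

lemma vop_e_add: "vop_e a n (v1 + v2) = vop_e a n v1 + vop_e a n v2"
proof -
  have split_if: "(if P then x + y else 0) = (if P then x else 0) + (if P then y else (0::complex))"
    for P x y by simp
  show ?thesis
    by (simp add: vop_e_def fun_eq_iff Let_def sE_add pE_add split_if sum.distrib distrib_left
        cong: if_cong)
qed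

lemma vop_e_tens:
  fixes a :: rt
  defines "h \<equiv> hv_of_wt (root_to_wt a)"
  shows "vop_e a n (tens u \<beta>) = tens (\<lambda>M. epsw (root_to_wt a) \<beta> *
    (\<Sum>j\<in>{0..mwt M}. if 0 \<le> int j + n + 1 + pair_rw a \<beta>
       then pE h j (sE h (nat (int j + n + 1 + pair_rw a \<beta>)) u) M else 0)) (\<beta> + root_to_wt a)"
proof (intro ext)
  fix \<gamma> M
  show "vop_e a n (tens u \<beta>) \<gamma> M = tens (\<lambda>M. epsw (root_to_wt a) \<beta> *
    (\<Sum>j\<in>{0..mwt M}. if 0 \<le> int j + n + 1 + pair_rw a \<beta>
       then pE h j (sE h (nat (int j + n + 1 + pair_rw a \<beta>)) u) M else 0)) (\<beta> + root_to_wt a) \<gamma> M"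
  proof (cases "\<gamma> = \<beta> + root_to_wt a")
    case True
    then have shift: "\<gamma> - root_to_wt a = \<beta>" by simp
    show ?thesis unfolding vop_e_def Let_def shift h_def tens_def by (simp add: True)
  next
    case False
    then have "\<gamma> - root_to_wt a \<noteq> \<beta>" by auto
    with False show ?thesis
      by (simp add: vop_e_def tens_def Let_def zero_fun_def[symmetric] sE_zero pE_zero cong: if_cong)
  qed
qed

text \<open>The \<open>j\<close>-th term of \<open>{1 \<otimes> e\<^sup>\<alpha>}\<^sub>n\<close> pairs \<open>pE\<^sub>j\<close> with \<open>sE\<^sub>j\<^sub>+\<^sub>C\<close>, where \<open>C = n + 1 + (\<alpha>, \<beta>)\<close>.
  On the states of weight at most one \<open>sE\<^sub>m\<close> vanishes for \<open>m \<ge> 2\<close>, and for \<open>m = 1\<close> when \<open>g = 0\<close>,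
  so only \<open>j = 0, 1\<close> survive.\<close>

lemma vertex_sum_fock_le1:
  fixes C :: int
  assumes "C \<ge> 0 \<or> C = -1 \<and> g = 0"
  shows "(\<lambda>M. \<Sum>j\<in>{0..mwt M}.
      if 0 \<le> int j + C then pE h j (sE h (nat (int j + C)) (fock_le1 c g)) M else 0)
    = (if 0 \<le> C then sE h (nat C) (fock_le1 c g) else 0) + cr h 1 (sE h (nat (C + 1)) (fock_le1 c g))"
proof -
  define T where "T j M = (if 0 \<le> int j + C then pE h j (sE h (nat (int j + C)) (fock_le1 c g)) M else 0)"
    for j M
  have high: "T j M = 0" if "j \<ge> 2" for j M
  proof -
    have "nat (int j + C) \<ge> 1" "nat (int j + C) = 1 \<Longrightarrow> g = 0" using that assms by auto
    then have "sE h (nat (int j + C)) (fock_le1 c g) = 0"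
      by (auto simp: sE_fock_le1 hform_zero fock_le1_zero)
    then show ?thesis by (simp add: T_def pE_zero)
  qed
  have low: "T 1 M = 0" if "mwt M = 0" for M
    using that by (simp add: T_def mwt_eq_0_iff pE_Suc_0 cr_at_0)
  have "(\<Sum>j\<in>{0..mwt M}. T j M) = (\<Sum>j\<in>{0, 1}. T j M)" for M
  proof (rule sum.mono_neutral_cong)
    show "T j M = 0" if "j \<in> {0, 1} - {0..mwt M}" for j
    proof -
      from that have "j = 1" "mwt M = 0" by auto
      then show ?thesis using low[of M] by simp
    qed
  qed (use high in auto)
  then have "(\<lambda>M. \<Sum>j\<in>{0..mwt M}. T j M) = (\<lambda>M. T 0 M + T 1 M)" by simp
  also have "\<dots> = (if 0 \<le> C then sE h (nat C) (fock_le1 c g) else 0)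
      + cr h 1 (sE h (nat (C + 1)) (fock_le1 c g))"
    using assms by (auto simp: T_def pE_Suc_0 fun_eq_iff add.commute)
  finally show ?thesis by (simp only: T_def)
qed

lemma vertex_terms_fock_le1:
  fixes C :: int
  assumes "C \<ge> 0 \<or> C = -1 \<and> g = 0"
  shows "(if 0 \<le> C then sE h (nat C) (fock_le1 c g) else 0) + cr h 1 (sE h (nat (C + 1)) (fock_le1 c g))
    = fock_le1 ((if C = 0 then c else 0) + (if C = 1 then - hform h g else 0))
        (\<lambda>i. (if C = 0 then g i - hform h g * h i else 0) + (if C = -1 then c * h i else 0))"
proof -
  consider "C = -1" "g = 0" | "C = 0" | "C = 1" | "C \<ge> 2" using assms by linarith
  then show ?thesis
  proof cases
    case 1
    then show ?thesis by (simp add: sE_fock_le1 cr_fock_le1_vac)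
  next
    case 2
    then show ?thesis
      by (simp add: sE_fock_le1 cr_fock_le1_vac fock_le1_add algebra_simps)
  next
    case 3
    then show ?thesis by (simp add: sE_fock_le1 cr_zero fock_le1_eq_iff)
  next
    case 4
    then have "nat C \<noteq> 1" by linarith
    with 4 show ?thesis by (simp add: sE_fock_le1 cr_zero fock_le1_zero nat_add_distrib)
  qed
qed

lemma vop_e_tens_fock_le1:
  fixes a :: rt and n :: int and \<beta> :: wt
  defines "C \<equiv> n + 1 + pair_rw a \<beta>" and "h \<equiv> hv_of_wt (root_to_wt a)"
    and "e \<equiv> epsw (root_to_wt a) \<beta>"
  assumes "C \<ge> 0 \<or> C = -1 \<and> g = 0"
  shows "vop_e a n (tens (fock_le1 c g) \<beta>) = tens (fock_le1
      (e * ((if C = 0 then c else 0) + (if C = 1 then - hform h g else 0)))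
      (\<lambda>i. e * ((if C = 0 then g i - hform h g * h i else 0) + (if C = -1 then c * h i else 0))))
    (\<beta> + root_to_wt a)"
proof -
  have "vop_e a n (tens (fock_le1 c g) \<beta>) = tens (fock_scale e (\<lambda>M. \<Sum>j\<in>{0..mwt M}.
      if 0 \<le> int j + C then pE h j (sE h (nat (int j + C)) (fock_le1 c g)) M else 0))
    (\<beta> + root_to_wt a)"
    unfolding vop_e_tens C_def h_def e_def fock_scale_def by (simp only: add.assoc)
  also have "(\<lambda>M. \<Sum>j\<in>{0..mwt M}.
      if 0 \<le> int j + C then pE h j (sE h (nat (int j + C)) (fock_le1 c g)) M else 0)
    = fock_le1 ((if C = 0 then c else 0) + (if C = 1 then - hform h g else 0))
        (\<lambda>i. (if C = 0 then g i - hform h g * h i else 0) + (if C = -1 then c * h i else 0))"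
    using assms(4) by (simp only: vertex_sum_fock_le1 vertex_terms_fock_le1)
  also note fock_le1_scale
  finally show ?thesis .
qed

section \<open>Normal ordered products of Heisenberg fields\<close>

lemma hmode_add: "hmode h m (v1 + v2) = hmode h m v1 + hmode h m v2"
  by (simp add: hmode_def fun_eq_iff cr_add an_add algebra_simps)

lemma vop_hh_add: "vop_hh h1 h2 n (v1 + v2) = vop_hh h1 h2 n v1 + vop_hh h1 h2 n v2"
proof -
  have split_if: "(if P then x1 + x2 else y1 + y2) = (if P then x1 else y1) + (if P then x2 else y2)"
    for P and x1 x2 y1 y2 :: vspace by simp
  show ?thesis
    by (simp add: vop_hh_def fun_eq_iff hmode_add split_if sum.distrib del: plus_fun_apply
        cong: if_cong) (simp add: sum.distrib)
qed

definition hmode_fock :: "hvec \<Rightarrow> int \<Rightarrow> wt \<Rightarrow> fock \<Rightarrow> fock" where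
  "hmode_fock h m \<beta> u = (if m < 0 then cr h (nat (- m)) u
     else if m = 0 then fock_scale (hform h (hv_of_wt \<beta>)) u else an h (nat m) u)"

lemma hmode_tens: "hmode h m (tens u \<beta>) = tens (hmode_fock h m \<beta> u) \<beta>"
proof (intro ext)
  fix \<gamma> M
  have "cr h k (\<lambda>_. 0) = (\<lambda>_. 0)" "an h k (\<lambda>_. 0) = (\<lambda>_. 0)" for k
    using cr_zero an_zero by (simp_all add: zero_fun_def)
  then show "hmode h m (tens u \<beta>) \<gamma> M = tens (hmode_fock h m \<beta> u) \<beta> \<gamma> M"
    by (auto simp: hmode_def tens_def hmode_fock_def fock_scale_def)
qed

lemma hmode_fock_zero: "hmode_fock h m \<beta> 0 = 0"
  by (simp add: hmode_fock_def cr_zero an_zero fock_scale_def fun_eq_iff)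

lemma hmode_fock_nonneg_fock_le1:
  fixes m :: int and h :: hvec and \<beta> :: wt
  defines "b \<equiv> hform h (hv_of_wt \<beta>)"
  assumes "0 \<le> m"
  shows "hmode_fock h m \<beta> (fock_le1 c g) = fock_le1 (if m = 0 then b * c else if m = 1 then hform h g else 0)
    (if m = 0 then (\<lambda>i. b * g i) else 0)"
proof -
  have "nat m = 1 \<longleftrightarrow> m = 1" using assms(2) by auto
  with assms(2) show ?thesis
    by (auto simp: hmode_fock_def b_def fock_le1_scale an_fock_le1 fock_le1_zero fock_le1_eq_iff)
qed

lemma hmode_fock_minus_1_vac: "hmode_fock h (- 1) \<beta> (fock_le1 c 0) = fock_le1 0 (\<lambda>i. c * h i)"
  by (simp add: hmode_fock_def cr_fock_le1_vac)

definition nord_fock :: "hvec \<Rightarrow> hvec \<Rightarrow> int \<Rightarrow> wt \<Rightarrow> int \<Rightarrow> fock \<Rightarrow> fock" where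
  "nord_fock h1 h2 n \<beta> a u = (if 0 \<le> a \<and> n - 1 - a < 0
     then hmode_fock h2 (n - 1 - a) \<beta> (hmode_fock h1 a \<beta> u)
     else hmode_fock h1 a \<beta> (hmode_fock h2 (n - 1 - a) \<beta> u))"

lemma vop_hh_tens:
  "vop_hh h1 h2 n (tens u \<beta>) =
    tens (\<lambda>M. \<Sum>a\<in>{- int (mwt M) .. n - 1 + int (mwt M)}. nord_fock h1 h2 n \<beta> a u M) \<beta>"
proof (intro ext)
  fix \<gamma> M
  have apply_if: "(if P then f else f') x = (if P then f x else f' x)" for P and f f' :: "'a \<Rightarrow> 'b" and x
    by simp
  show "vop_hh h1 h2 n (tens u \<beta>) \<gamma> M =
    tens (\<lambda>M. \<Sum>a\<in>{- int (mwt M) .. n - 1 + int (mwt M)}. nord_fock h1 h2 n \<beta> a u M) \<beta> \<gamma> M"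
    unfolding vop_hh_def hmode_tens nord_fock_def
    by (cases "\<gamma> = \<beta>") (simp_all add: tens_def apply_if cong: if_cong)
qed

lemma nord_fock_fock_le1_outside:
  assumes "1 \<le> n" and "a \<notin> {-1, 0, 1}"
  shows "nord_fock h1 h2 n \<beta> a (fock_le1 c g) = 0"
proof (cases "a \<ge> 2")
  case True
  then show ?thesis
    by (auto simp: nord_fock_def hmode_fock_nonneg_fock_le1 hmode_fock_zero fock_le1_zero)
next
  case False
  with assms have "a \<le> -2" "n - 1 - a \<ge> 2" by auto
  then show ?thesis
    by (simp add: nord_fock_def hmode_fock_nonneg_fock_le1 hmode_fock_zero fock_le1_zero)
qed

lemma nord_fock_fock_le1_window:
  fixes n :: int and h1 h2 :: hvec and \<beta> :: wt
  defines "b1 \<equiv> hform h1 (hv_of_wt \<beta>)" and "b2 \<equiv> hform h2 (hv_of_wt \<beta>)"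
  assumes "1 \<le> n"
  shows "nord_fock h1 h2 n \<beta> (-1) (fock_le1 c g) + nord_fock h1 h2 n \<beta> 0 (fock_le1 c g)
      + nord_fock h1 h2 n \<beta> 1 (fock_le1 c g)
    = (if n = 1 then fock_le1 (b1 * b2 * c) (\<lambda>i. b1 * b2 * g i + hform h1 g * h2 i + hform h2 g * h1 i)
       else if n = 2 then fock_le1 (b1 * hform h2 g + b2 * hform h1 g) 0 else 0)"
proof -
  consider "n = 1" | "n = 2" | "n \<ge> 3" using assms(3) by linarith
  then show ?thesis
  proof cases
    case 1
    then show ?thesis
      by (simp add: nord_fock_def hmode_fock_nonneg_fock_le1 hmode_fock_minus_1_vac fock_le1_add
          b1_def b2_def algebra_simps)
  next
    case 2
    then show ?thesis
      by (simp add: nord_fock_def hmode_fock_nonneg_fock_le1 hmode_fock_zero fock_le1_zero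
          fock_le1_add fock_le1_eq_iff hform_scale_right b1_def b2_def)
  next
    case 3
    then show ?thesis
      by (simp add: nord_fock_def hmode_fock_nonneg_fock_le1 hmode_fock_zero fock_le1_zero hform_zero)
  qed
qed

lemma vop_hh_tens_fock_le1:
  fixes n :: int and h1 h2 :: hvec and \<beta> :: wt
  defines "b1 \<equiv> hform h1 (hv_of_wt \<beta>)" and "b2 \<equiv> hform h2 (hv_of_wt \<beta>)"
  assumes "1 \<le> n"
  shows "vop_hh h1 h2 n (tens (fock_le1 c g) \<beta>) = tens
    (if n = 1 then fock_le1 (b1 * b2 * c) (\<lambda>i. b1 * b2 * g i + hform h1 g * h2 i + hform h2 g * h1 i)
     else if n = 2 then fock_le1 (b1 * hform h2 g + b2 * hform h1 g) 0 else 0) \<beta>"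
proof -
  let ?N = "\<lambda>a. nord_fock h1 h2 n \<beta> a (fock_le1 c g)"
  have "(\<Sum>a\<in>{- int (mwt M) .. n - 1 + int (mwt M)}. ?N a M) = (?N (-1) + ?N 0 + ?N 1) M" for M
  proof -
    have "(\<Sum>a\<in>{- int (mwt M) .. n - 1 + int (mwt M)}. ?N a M) = (\<Sum>a\<in>{-1, 0, 1}. ?N a M)"
    proof (rule sum.mono_neutral_cong)
      show "?N a M = 0" if "a \<in> {-1, 0, 1} - {- int (mwt M) .. n - 1 + int (mwt M)}" for a
      proof -
        from that assms(3) have "mwt M = 0" "a = -1 \<or> a = 1 \<and> n = 1" by auto
        then have "M = 0" "a = -1 \<or> a = 1 \<and> n = 1" by (simp_all add: mwt_eq_0_iff)
        then show ?thesis by (auto simp: nord_fock_def hmode_fock_def cr_at_0)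
      qed
      show "?N a M = 0" if "a \<in> {- int (mwt M) .. n - 1 + int (mwt M)} - {-1, 0, 1}" for a
        using that assms(3) nord_fock_fock_le1_outside by auto
    qed auto
    then show ?thesis by simp
  qed
  then show ?thesis
    using nord_fock_fock_le1_window[OF assms(3), where c = c and g = g]
    by (simp add: vop_hh_tens b1_def b2_def)
qed

lemma vec6_apply [simp]:
  "vec6 a1 a2 a3 a4 a5 a6 I1 = a1" "vec6 a1 a2 a3 a4 a5 a6 I2 = a2" "vec6 a1 a2 a3 a4 a5 a6 I3 = a3"
  "vec6 a1 a2 a3 a4 a5 a6 I4 = a4" "vec6 a1 a2 a3 a4 a5 a6 I5 = a5" "vec6 a1 a2 a3 a4 a5 a6 I6 = a6"
  by (simp_all add: vec6_def)

lemma all_idx_iff: "(\<forall>i. P i) \<longleftrightarrow> P I1 \<and> P I2 \<and> P I3 \<and> P I4 \<and> P I5 \<and> P I6"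
  by (metis idx.exhaust)

lemma vec6_eq_iff: "vec6 a1 a2 a3 a4 a5 a6 = vec6 b1 b2 b3 b4 b5 b6 \<longleftrightarrow>
    a1 = b1 \<and> a2 = b2 \<and> a3 = b3 \<and> a4 = b4 \<and> a5 = b5 \<and> a6 = b6"
  unfolding fun_eq_iff all_idx_iff by simp

lemma zero_vec6: "0 = vec6 0 0 0 0 0 0"
  unfolding fun_eq_iff all_idx_iff by simp

lemma vec6_add: "vec6 a1 a2 a3 a4 a5 a6 + vec6 b1 b2 b3 b4 b5 b6 =
    vec6 (a1 + b1) (a2 + b2) (a3 + b3) (a4 + b4) (a5 + b5) (a6 + b6)"
  unfolding fun_eq_iff all_idx_iff by simp

lemma vec6_diff: "vec6 a1 a2 a3 a4 a5 a6 - vec6 b1 b2 b3 b4 b5 b6 =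
    vec6 (a1 - b1) (a2 - b2) (a3 - b3) (a4 - b4) (a5 - b5) (a6 - b6)"
  unfolding fun_eq_iff all_idx_iff by simp

lemma vec6_uminus: "- vec6 a1 a2 a3 a4 a5 a6 = vec6 (- a1) (- a2) (- a3) (- a4) (- a5) (- a6)"
  unfolding fun_eq_iff all_idx_iff by simp

lemma alpha_vec6:
  "alpha I1 = vec6 1 0 0 0 0 0" "alpha I2 = vec6 0 1 0 0 0 0" "alpha I3 = vec6 0 0 1 0 0 0"
  "alpha I4 = vec6 0 0 0 1 0 0" "alpha I5 = vec6 0 0 0 0 1 0" "alpha I6 = vec6 0 0 0 0 0 1"
  unfolding fun_eq_iff all_idx_iff by (simp_all add: alpha_def)

lemma root_to_wt_vec6: "root_to_wt (vec6 a1 a2 a3 a4 a5 a6) =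
    vec6 (2*a1 - a3) (2*a2 - a4) (2*a3 - a1 - a4) (2*a4 - a2 - a3 - a5) (2*a5 - a4 - a6) (2*a6 - a5)"
  unfolding fun_eq_iff all_idx_iff by (simp add: root_to_wt_def UNIV_idx cartan_def)

lemma hv_of_wt_vec6: "hv_of_wt (vec6 a1 a2 a3 a4 a5 a6) =
    vec6 (of_int a1) (of_int a2) (of_int a3) (of_int a4) (of_int a5) (of_int a6)"
  unfolding fun_eq_iff all_idx_iff by (simp add: hv_of_wt_def)

lemma pair_rw_vec6: "pair_rw (vec6 a1 a2 a3 a4 a5 a6) (vec6 b1 b2 b3 b4 b5 b6) =
    a1*b1 + a2*b2 + a3*b3 + a4*b4 + a5*b5 + a6*b6"
  by (simp add: pair_rw_def UNIV_idx)

lemma epsw_vec6: "epsw (vec6 x1 x2 x3 x4 x5 x6) (vec6 y1 y2 y3 y4 y5 y6) =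
    (if even (x2*y1 + x2*y6 + x3*y1 + x4*y2 + x5*y6) then 1 else -1)"
proof -
  have "(\<Sum>i\<in>UNIV. \<Sum>j\<in>UNIV. if eps_tab i j = -1
        then vec6 x1 x2 x3 x4 x5 x6 i * vec6 y1 y2 y3 y4 y5 y6 j else 0)
      = x2*y1 + x2*y6 + x3*y1 + x4*y2 + x5*y6"
    by (simp add: UNIV_idx eps_tab_def)
  then show ?thesis by (simp add: epsw_def)
qed

lemma hform_vec6: "hform (vec6 x1 x2 x3 x4 x5 x6) (vec6 y1 y2 y3 y4 y5 y6) =
      x1 * (4/3 * y1 + y2 + 5/3 * y3 + 2 * y4 + 4/3 * y5 + 2/3 * y6)
    + x2 * (y1 + 2 * y2 + 2 * y3 + 3 * y4 + 2 * y5 + y6)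
    + x3 * (5/3 * y1 + 2 * y2 + 10/3 * y3 + 4 * y4 + 8/3 * y5 + 4/3 * y6)
    + x4 * (2 * y1 + 3 * y2 + 4 * y3 + 6 * y4 + 4 * y5 + 2 * y6)
    + x5 * (4/3 * y1 + 2 * y2 + 8/3 * y3 + 4 * y4 + 10/3 * y5 + 5/3 * y6)
    + x6 * (2/3 * y1 + y2 + 4/3 * y3 + 2 * y4 + 5/3 * y5 + 4/3 * y6)"
  by (simp add: hform_def UNIV_idx gram_def of_rat_divide algebra_simps)

lemma proj_wt_vec6: "proj_wt (vec6 a1 a2 a3 a4 a5 a6) = vec6 ((of_int a1 + of_int a6) / 2) (of_int a2)
    ((of_int a3 + of_int a5) / 2) (of_int a4) ((of_int a5 + of_int a3) / 2) ((of_int a6 + of_int a1) / 2)"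
  unfolding fun_eq_iff all_idx_iff by (simp add: proj_wt_def)

lemmas vec6_simps = zero_vec6 vec6_add vec6_diff vec6_uminus vec6_eq_iff alpha_vec6 root_to_wt_vec6
  hv_of_wt_vec6 pair_rw_vec6 epsw_vec6 hform_vec6

lemma P_vec_eq_tens: "P_vec =
     tens (fock_le1 0 (vec6 (-3) 0 0 0 0 3)) (vec6 0 0 1 0 (-1) 1)
   + tens (fock_le1 0 (vec6 3 0 0 0 0 (-3))) (vec6 1 0 (-1) 0 1 0)
   + tens (fock_le1 3 0) (vec6 2 0 0 0 0 (-1))
   + tens (fock_le1 3 0) (vec6 (-1) 0 0 0 0 2)"
proof -
  have "cr g 1 vac = fock_le1 0 g" "(\<lambda>M. c * vac M) = fock_le1 c 0" for g c
    by (simp_all add: fock_le1_def cr_def fun_eq_iff)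
  then show ?thesis
    unfolding P_vec_def by (simp add: vec6_simps mu_def tau_mu_def)
qed

lemma tens_zero: "tens 0 \<beta> = 0"
  by (simp add: tens_def fun_eq_iff)

lemma tens_fock_le1_apply:
  "tens (fock_le1 c g) \<beta> \<gamma> = fock_le1 (if \<gamma> = \<beta> then c else 0) (\<lambda>i. if \<gamma> = \<beta> then g i else 0)"
  by (simp add: tens_def fock_le1_zero zero_fun_def)

lemma vsc_apply: "vsc c v \<gamma> = fock_scale c (v \<gamma>)"
  by (simp add: vsc_def fock_scale_def)

lemmas fock_le1_simps = tens_zero fock_scale_zero tens_fock_le1_apply vsc_apply fock_le1_add fock_le1_diff fock_le1_uminus
  fock_le1_scale fock_le1_numeral fock_le1_eq_iff fock_le1_eq_0_iff all_idx_iff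

lemmas P_vec_eval = P_vec_eq_tens vop_e_add vop_e_tens_fock_le1 vop_hh_add vop_hh_tens_fock_le1
  vec6_simps fock_le1_simps

lemma vop_e_neg_theta_P_vec: "vop_e (- theta) 1 P_vec = 0"
  by (rule ext) (simp add: P_vec_eval theta_def)

lemma vop_e_alpha2_P_vec: "vop_e (alpha I2) 0 P_vec = 0"
  by (rule ext) (simp add: P_vec_eval)

lemma vop_e_alpha4_P_vec: "vop_e (alpha I4) 0 P_vec = 0"
  by (rule ext) (simp add: P_vec_eval)

lemma vop_e_alpha35_P_vec: "vop_e (alpha I3) 0 P_vec + vop_e (alpha I5) 0 P_vec = 0"
  by (rule ext) (simp add: P_vec_eval)

lemma vop_e_alpha16_P_vec: "vop_e (alpha I1) 0 P_vec + vop_e (alpha I6) 0 P_vec = 0"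
  by (rule ext) (simp add: P_vec_eval)

lemmas Lvir_eval = P_vec_eval Lvir_def gam1_def gam2_def gam3_def om_h1_def om_h2_def om_h3_def

lemma Lvir_1_P_vec: "Lvir 1 P_vec = 0"
  by (rule ext) (simp add: Lvir_eval)

lemma Lvir_2_P_vec: "Lvir 2 P_vec = 0"
  by (rule ext) (simp add: Lvir_eval)

lemma Lvir_0_P_vec: "Lvir 0 P_vec = vsc (7/5) P_vec"
  by (rule ext) (simp add: Lvir_eval)

lemma P_vec_apply: "P_vec \<gamma> = fock_le1
    ((if \<gamma> = vec6 2 0 0 0 0 (-1) then 3 else 0) + (if \<gamma> = vec6 (-1) 0 0 0 0 2 then 3 else 0))
    (\<lambda>i. (if \<gamma> = vec6 0 0 1 0 (-1) 1 then vec6 (-3) 0 0 0 0 3 i else 0)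
       + (if \<gamma> = vec6 1 0 (-1) 0 1 0 then vec6 3 0 0 0 0 (-3) i else 0))"
  by (simp add: P_vec_eq_tens tens_fock_le1_apply fock_le1_add fock_le1_eq_iff)

lemma P_vec_support:
  "{\<gamma>. P_vec \<gamma> \<noteq> 0} \<subseteq> {vec6 0 0 1 0 (-1) 1, vec6 1 0 (-1) 0 1 0, vec6 2 0 0 0 0 (-1), vec6 (-1) 0 0 0 0 2}"
  by (auto simp: P_vec_apply fock_le1_zero)

lemma P_vec_neq_0: "P_vec \<noteq> 0"
proof
  assume "P_vec = 0"
  then have "P_vec (vec6 2 0 0 0 0 (-1)) = 0" by simp
  then show False by (simp add: P_vec_apply vec6_eq_iff fock_le1_eq_0_iff)
qed

lemma proj_wt_P_vec_support: "P_vec \<gamma> \<noteq> 0 \<Longrightarrow> proj_wt \<gamma> = omega4"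
  using P_vec_support by (auto simp: proj_wt_vec6 omega4_def vec6_eq_iff)

theorem lemma6p3:
  shows "is_hwv (7/5) omega4 P_vec"
proof -
  have "finite {\<beta>. P_vec \<beta> \<noteq> 0}"
    using P_vec_support by (rule finite_subset) simp
  moreover have "\<forall>\<beta>. finite {M. P_vec \<beta> M \<noteq> 0}"
    unfolding P_vec_apply by (simp add: finite_support_fock_le1)
  ultimately show ?thesis
    unfolding is_hwv_def
    using P_vec_neq_0 vop_e_neg_theta_P_vec vop_e_alpha2_P_vec vop_e_alpha4_P_vec
      vop_e_alpha35_P_vec vop_e_alpha16_P_vec Lvir_1_P_vec Lvir_2_P_vec Lvir_0_P_vec
      proj_wt_P_vec_support
    by simp
qed

end
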